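(* Let $n\ge 3$. Consider the two-graph Moran process on $n$ vertices in which the resident graph $G_R$ is the clique $K_n$ and the mutant graph $G_M$ is the undirected star $K_{1,n-1}$. For every $r>0$, the fixation probability satisfies $$f_{G_R,G_M}(r)\le \frac{r^{n-1}}{(n-2)!}.$$
   Context: Two-graph Moran process: vertex set $V=\{1,\dots,n\}$; resident graph $G_R=(V,E_R)$ and mutant graph $G_M=(V,E_M)$, strongly connected, with row-stochastic weight matrices $W_R=[w^R_{ij}]$, $W_M=[w^M_{ij}]$ ($w^R_{ij}>0$ iff $(i,j)\in E_R$, similarly for $M$). The state is the mutant set $S$; residents have fitness $1$, mutants fitness $r>0$. Each step a vertex $i$ is chosen with probability proportional to fitness; if $i$ is a mutant, it picks $j$ with probability $w^M_{ij}$ and $j$ becomes a mutant; if a resident, it picks $j$ with probability $w^R_{ij}$ and $j$ becomes a resident. Absorption at $S=\emptyset$ or $S=V$ (fixation). The fixation probability $f_{G_R,G_M}(r)$ is the probability of fixation when starting with one mutant at a uniformly random vertex. Undirected graphs are unweighted: $w_{ij}=1/\deg(i)$ for each neighbour $j$ of $i$. *)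

theory Defs
  imports Complex_Main
begin

text \<open>Two-graph Moran process on the vertex set {0..<n} (the paper's {1,...,n},
shifted by one). Weight matrices are functions nat => nat => real.
A state is the set S of mutant vertices.\<close>

definition fitness :: "real \<Rightarrow> nat set \<Rightarrow> nat \<Rightarrow> real" where
  "fitness r S i = (if i \<in> S then r else 1)"

definition moran_update :: "nat set \<Rightarrow> nat \<Rightarrow> nat \<Rightarrow> nat set" where
  "moran_update S i j = (if i \<in> S then insert j S else S - {j})"

definition moran_step ::
  "nat \<Rightarrow> real \<Rightarrow> (nat \<Rightarrow> nat \<Rightarrow> real) \<Rightarrow> (nat \<Rightarrow> nat \<Rightarrow> real) \<Rightarrow> nat set \<Rightarrow> nat set \<Rightarrow> real" where
  "moran_step n r WR WM S T =
     (\<Sum>i<n. \<Sum>j<n. (fitness r S i / (\<Sum>k<n. fitness r S k))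
        * (if i \<in> S then WM i j else WR i j)
        * (if moran_update S i j = T then 1 else 0))"

primrec moran_tprob ::
  "nat \<Rightarrow> real \<Rightarrow> (nat \<Rightarrow> nat \<Rightarrow> real) \<Rightarrow> (nat \<Rightarrow> nat \<Rightarrow> real) \<Rightarrow> nat \<Rightarrow> nat set \<Rightarrow> nat set \<Rightarrow> real" where
  "moran_tprob n r WR WM 0 S T = (if S = T then 1 else 0)"
| "moran_tprob n r WR WM (Suc t) S T =
     (\<Sum>U\<in>Pow {..<n}. moran_step n r WR WM S U * moran_tprob n r WR WM t U T)"

definition fixation_from ::
  "nat \<Rightarrow> real \<Rightarrow> (nat \<Rightarrow> nat \<Rightarrow> real) \<Rightarrow> (nat \<Rightarrow> nat \<Rightarrow> real) \<Rightarrow> nat set \<Rightarrow> real" where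
  "fixation_from n r WR WM S = lim (\<lambda>t. moran_tprob n r WR WM t S {..<n})"

definition fixation_prob ::
  "nat \<Rightarrow> real \<Rightarrow> (nat \<Rightarrow> nat \<Rightarrow> real) \<Rightarrow> (nat \<Rightarrow> nat \<Rightarrow> real) \<Rightarrow> real" where
  "fixation_prob n r WR WM = (\<Sum>v<n. fixation_from n r WR WM {v}) / real n"

definition clique_W :: "nat \<Rightarrow> nat \<Rightarrow> nat \<Rightarrow> real" where
  "clique_W n i j = (if i \<noteq> j then 1 / (real n - 1) else 0)"

definition star_W :: "nat \<Rightarrow> nat \<Rightarrow> nat \<Rightarrow> real" where
  "star_W n i j =
     (if i = 0 then (if j \<noteq> 0 then 1 / (real n - 1) else 0)
      else (if j = 0 then 1 else 0))"

end

theory Submission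
  imports Defs
begin

text \<open>The probability of being at the full state after t steps increases with t, so the
fixation probability from S is its supremum and is bounded by \<phi> S for every nonnegative
superharmonic \<phi> with \<phi> V \<ge> 1. For resident clique and mutant star take
\<phi> S = \<Phi> c k, where c says whether the centre is a mutant and k counts the mutant leaves,
with \<Phi> True k = g k, \<Phi> False k = g k for k \<ge> 2, \<Phi> False 1 = d, \<Phi> False 0 = 0, and
g 0 = d, g (k + 1) = g k + k! d / r^(k+1). The increments of g satisfy
r (g (k + 1) - g k) = k (g k - g (k - 1)); this makes the expected one-step change of \<phi>
vanish in most states and nonpositive in all of them. With d = r^(n-1) / (n-2)! one gets
\<phi> V = g (n - 1) = g (n - 2) + 1 \<ge> 1, while \<phi> is d on every single-mutant state.\<close>

lemma moran_step_nonneg: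
  assumes "r > 0" and "\<And>i j. WR i j \<ge> 0" and "\<And>i j. WM i j \<ge> 0"
  shows "moran_step n r WR WM S T \<ge> 0"
proof -
  have "fitness r S i > 0" for i
    using assms(1) by (simp add: fitness_def)
  then show ?thesis
    unfolding moran_step_def using assms(2,3)
    by (intro sum_nonneg mult_nonneg_nonneg divide_nonneg_nonneg) (auto intro: less_imp_le)
qed

lemma moran_step_full_absorbing:
  assumes "n > 0" and "r > 0" and "\<And>i. i < n \<Longrightarrow> (\<Sum>j<n. WM i j) = 1"
  shows "moran_step n r WR WM {..<n} {..<n} = 1"
proof -
  have "moran_step n r WR WM {..<n} {..<n} = (\<Sum>i<n. r / (real n * r) * (\<Sum>j<n. WM i j))"
    unfolding moran_step_def by (simp add: fitness_def moran_update_def insert_absorb sum_distrib_left)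
  also have "\<dots> = 1"
    using assms by simp
  finally show ?thesis .
qed

lemma moran_tprob_full_mono:
  assumes step_nonneg: "\<And>S T. moran_step n r WR WM S T \<ge> 0"
    and full: "moran_step n r WR WM {..<n} {..<n} = 1"
  shows "moran_tprob n r WR WM t S {..<n} \<le> moran_tprob n r WR WM (Suc t) S {..<n}"
proof (induction t arbitrary: S)
  case 0
  show ?case
    using full step_nonneg[of S "{..<n}"] by (simp add: if_distrib cong: if_cong)
next
  case (Suc t)
  have "moran_tprob n r WR WM (Suc t) S {..<n}
      \<le> (\<Sum>U\<in>Pow {..<n}. moran_step n r WR WM S U * moran_tprob n r WR WM (Suc t) U {..<n})"
    unfolding moran_tprob.simps(2)[of _ _ _ _ t] using Suc.IH step_nonneg
    by (intro sum_mono mult_left_mono) auto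
  then show ?case
    by (simp only: moran_tprob.simps(2)[of _ _ _ _ "Suc t"])
qed

lemma moran_tprob_le_superharmonic:
  assumes step_nonneg: "\<And>S T. moran_step n r WR WM S T \<ge> 0"
    and superharmonic: "\<And>S. S \<subseteq> {..<n} \<Longrightarrow> (\<Sum>U\<in>Pow {..<n}. moran_step n r WR WM S U * \<phi> U) \<le> \<phi> S"
    and nonneg: "\<And>S. S \<subseteq> {..<n} \<Longrightarrow> \<phi> S \<ge> 0"
    and full: "\<phi> {..<n} \<ge> 1"
    and "S \<subseteq> {..<n}"
  shows "moran_tprob n r WR WM t S {..<n} \<le> \<phi> S"
  using \<open>S \<subseteq> {..<n}\<close>
proof (induction t arbitrary: S)
  case 0
  then show ?case using nonneg full by auto
next
  case (Suc t)
  have "moran_tprob n r WR WM (Suc t) S {..<n}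
      \<le> (\<Sum>U\<in>Pow {..<n}. moran_step n r WR WM S U * \<phi> U)"
    unfolding moran_tprob.simps using Suc.IH step_nonneg by (intro sum_mono mult_left_mono) auto
  also have "\<dots> \<le> \<phi> S"
    using superharmonic Suc.prems .
  finally show ?case .
qed

lemma fixation_from_le_superharmonic:
  assumes step_nonneg: "\<And>S T. moran_step n r WR WM S T \<ge> 0"
    and absorbing: "moran_step n r WR WM {..<n} {..<n} = 1"
    and superharmonic: "\<And>S. S \<subseteq> {..<n} \<Longrightarrow> (\<Sum>U\<in>Pow {..<n}. moran_step n r WR WM S U * \<phi> U) \<le> \<phi> S"
    and nonneg: "\<And>S. S \<subseteq> {..<n} \<Longrightarrow> \<phi> S \<ge> 0"
    and full: "\<phi> {..<n} \<ge> 1"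
    and S: "S \<subseteq> {..<n}"
  shows "fixation_from n r WR WM S \<le> \<phi> S"
proof -
  let ?p = "\<lambda>t. moran_tprob n r WR WM t S {..<n}"
  have le: "?p t \<le> \<phi> S" for t
    using moran_tprob_le_superharmonic[OF step_nonneg superharmonic nonneg full S] .
  have "incseq ?p"
    using moran_tprob_full_mono[OF step_nonneg absorbing] by (rule incseq_SucI)
  moreover have "bdd_above (range ?p)"
    using le by (intro bdd_aboveI2)
  ultimately have "?p \<longlonglongrightarrow> (SUP t. ?p t)"
    by (intro LIMSEQ_incseq_SUP)
  then have "fixation_from n r WR WM S = (SUP t. ?p t)"
    unfolding fixation_from_def by (rule limI)
  also have "\<dots> \<le> \<phi> S"
    using le by (intro cSUP_least) auto
  finally show ?thesis .
qed

lemma fixation_prob_le: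
  assumes "n > 0" and "\<And>v. v < n \<Longrightarrow> fixation_from n r WR WM {v} \<le> d"
  shows "fixation_prob n r WR WM \<le> d"
proof -
  have "(\<Sum>v<n. fixation_from n r WR WM {v}) \<le> real n * d"
    using sum_mono[of "{..<n}" "\<lambda>v. fixation_from n r WR WM {v}" "\<lambda>_. d"] assms(2) by simp
  then show ?thesis
    unfolding fixation_prob_def using assms(1) by (simp add: divide_le_eq mult.commute)
qed

definition moran_drift ::
  "nat \<Rightarrow> real \<Rightarrow> (nat \<Rightarrow> nat \<Rightarrow> real) \<Rightarrow> (nat \<Rightarrow> nat \<Rightarrow> real) \<Rightarrow> (nat set \<Rightarrow> real) \<Rightarrow> nat set \<Rightarrow> real" where
  "moran_drift n r WR WM \<phi> S =
     (\<Sum>i<n. fitness r S i *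
        (\<Sum>j<n. (if i \<in> S then WM i j else WR i j) * (\<phi> (moran_update S i j) - \<phi> S)))"

lemma moran_update_subset: "S \<subseteq> {..<n} \<Longrightarrow> j < n \<Longrightarrow> moran_update S i j \<subseteq> {..<n}"
  by (auto simp: moran_update_def)

lemma sum_moran_step_mult:
  assumes "S \<subseteq> {..<n}"
  shows "(\<Sum>U\<in>Pow {..<n}. moran_step n r WR WM S U * g U) =
    (\<Sum>i<n. \<Sum>j<n. fitness r S i / (\<Sum>k<n. fitness r S k)
       * (if i \<in> S then WM i j else WR i j) * g (moran_update S i j))"
proof -
  have "(\<Sum>U\<in>Pow {..<n}. moran_step n r WR WM S U * g U) =
    (\<Sum>i<n. \<Sum>j<n. \<Sum>U\<in>Pow {..<n}. fitness r S i / (\<Sum>k<n. fitness r S k)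
       * (if i \<in> S then WM i j else WR i j) * (if moran_update S i j = U then g U else 0))"
    unfolding moran_step_def sum_distrib_right
    by (subst sum.swap, subst (2) sum.swap) (auto intro!: sum.cong)
  also have "\<dots> = (\<Sum>i<n. \<Sum>j<n. fitness r S i / (\<Sum>k<n. fitness r S k)
       * (if i \<in> S then WM i j else WR i j) * g (moran_update S i j))"
    using moran_update_subset[OF assms]
    by (intro sum.cong refl) (subst sum_distrib_left[symmetric], subst sum.delta', auto)
  finally show ?thesis .
qed

lemma sum_moran_step_mult_eq_drift:
  assumes S: "S \<subseteq> {..<n}" and "n > 0" and "r > 0"
    and rows_R: "\<And>i. i < n \<Longrightarrow> (\<Sum>j<n. WR i j) = 1"
    and rows_M: "\<And>i. i < n \<Longrightarrow> (\<Sum>j<n. WM i j) = 1"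
  shows "(\<Sum>U\<in>Pow {..<n}. moran_step n r WR WM S U * \<phi> U) =
    \<phi> S + moran_drift n r WR WM \<phi> S / (\<Sum>k<n. fitness r S k)"
proof -
  let ?F = "\<Sum>k<n. fitness r S k"
  let ?W = "\<lambda>i j. if i \<in> S then WM i j else WR i j"
  have "?F > 0"
    using assms(2,3) by (intro sum_pos) (auto simp: fitness_def)
  have rows: "(\<Sum>j<n. ?W i j * \<phi> (moran_update S i j)) =
      (\<Sum>j<n. ?W i j * (\<phi> (moran_update S i j) - \<phi> S)) + \<phi> S" if "i < n" for i
    using rows_R[OF that] rows_M[OF that]
    by (cases "i \<in> S") (simp_all add: right_diff_distrib sum_subtractf sum_distrib_right[symmetric])
  have "(\<Sum>U\<in>Pow {..<n}. moran_step n r WR WM S U * \<phi> U) =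
      (\<Sum>i<n. fitness r S i * (\<Sum>j<n. ?W i j * \<phi> (moran_update S i j))) / ?F"
    unfolding sum_moran_step_mult[OF S] sum_divide_distrib sum_distrib_left
    by (intro sum.cong refl) (simp add: mult_ac)
  also have "\<dots> = (moran_drift n r WR WM \<phi> S + ?F * \<phi> S) / ?F"
    unfolding moran_drift_def
    by (simp add: rows distrib_left sum.distrib sum_distrib_right[symmetric])
  also have "\<dots> = \<phi> S + moran_drift n r WR WM \<phi> S / ?F"
    using \<open>?F > 0\<close> by (simp add: field_simps)
  finally show ?thesis .
qed

lemma sum_lessThan_if_neq:
  assumes "i < n"
  shows "(\<Sum>j<n. if j \<noteq> i then c else 0) = (real n - 1) * (c :: real)"
proof -
  have "{j\<in>{..<n}. j \<noteq> i} = {..<n} - {i}"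
    by blast
  then have "(\<Sum>j<n. if j \<noteq> i then c else 0) = (\<Sum>j\<in>{..<n} - {i}. c)"
    using sum.inter_filter[of "{..<n}" "\<lambda>_. c" "\<lambda>j. j \<noteq> i"] by simp
  also have "\<dots> = (real n - 1) * c"
    using assms by (simp add: of_nat_diff)
  finally show ?thesis .
qed

lemma clique_W_row_sum:
  assumes "i < n" and "n \<ge> 2"
  shows "(\<Sum>j<n. clique_W n i j) = 1"
proof -
  have "clique_W n i j = (if j \<noteq> i then 1 / (real n - 1) else 0)" for j
    by (auto simp: clique_W_def)
  then show ?thesis
    using sum_lessThan_if_neq[OF assms(1), of "1 / (real n - 1)"] assms(2) by simp
qed

lemma star_W_row_sum:
  assumes "i < n" and "n \<ge> 2"
  shows "(\<Sum>j<n. star_W n i j) = 1"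
proof (cases "i = 0")
  case True
  then show ?thesis
    using sum_lessThan_if_neq[of 0 n "1 / (real n - 1)"] assms by (simp add: star_W_def)
next
  case False
  then show ?thesis using assms by (simp add: star_W_def)
qed

lemma clique_W_nonneg: "n > 0 \<Longrightarrow> clique_W n i j \<ge> 0"
  by (simp add: clique_W_def)

lemma star_W_nonneg: "n > 0 \<Longrightarrow> star_W n i j \<ge> 0"
  by (simp add: star_W_def)

definition star_lift :: "(bool \<Rightarrow> nat \<Rightarrow> real) \<Rightarrow> nat set \<Rightarrow> real" where
  "star_lift \<Phi> S = \<Phi> (0 \<in> S) (card (S - {0}))"

lemma card_lessThan_diff:
  "S \<subseteq> {..<n} \<Longrightarrow> real (card ({..<n} - S)) = real n - real (card S)"
  using card_mono[of "{..<n}" S] by (simp add: card_Diff_subset finite_subset of_nat_diff)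

lemma card_eq_centre_plus_leaves:
  assumes "finite S"
  shows "real (card S) = (if 0 \<in> S then 1 else 0) + real (card (S - {0}))"
proof (cases "0 \<in> S")
  case True
  then show ?thesis using card_Suc_Diff1[OF assms True] by simp
qed simp

lemma star_centre_drift:
  assumes S: "S \<subseteq> {..<n}" and "0 \<in> S"
  defines "k \<equiv> card (S - {0})"
  shows "(\<Sum>j<n. star_W n 0 j * (star_lift \<Phi> (insert j S) - star_lift \<Phi> S)) =
    (real n - 1 - real k) / (real n - 1) * (\<Phi> True (Suc k) - \<Phi> True k)"
proof -
  let ?c = "(\<Phi> True (Suc k) - \<Phi> True k) / (real n - 1)"
  have fin: "finite S" using S finite_subset by blast
  have "star_W n 0 j * (star_lift \<Phi> (insert j S) - star_lift \<Phi> S) = (if j \<notin> S then ?c else 0)" for j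
  proof (cases "j \<in> S")
    case False
    have "j \<noteq> 0" using False \<open>0 \<in> S\<close> by metis
    then have "insert j S - {0} = insert j (S - {0})" by blast
    then have "star_lift \<Phi> (insert j S) = \<Phi> True (Suc k)"
      using False fin \<open>0 \<in> S\<close> by (simp add: star_lift_def k_def)
    moreover have "star_lift \<Phi> S = \<Phi> True k"
      using \<open>0 \<in> S\<close> by (simp add: star_lift_def k_def)
    ultimately show ?thesis using False \<open>j \<noteq> 0\<close> by (simp add: star_W_def)
  qed (simp add: insert_absorb)
  then have "(\<Sum>j<n. star_W n 0 j * (star_lift \<Phi> (insert j S) - star_lift \<Phi> S)) =
      (\<Sum>j<n. if j \<notin> S then ?c else 0)"
    by simp
  also have "\<dots> = (\<Sum>j\<in>{j\<in>{..<n}. j \<notin> S}. ?c)"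
    by (rule sum.inter_filter[symmetric]) simp
  also have "{j\<in>{..<n}. j \<notin> S} = {..<n} - S" by blast
  also have "(\<Sum>j\<in>{..<n} - S. ?c) = real (card ({..<n} - S)) * ?c"
    by (rule sum_constant)
  also have "real (card ({..<n} - S)) = real n - 1 - real k"
    using card_lessThan_diff[OF S] card_eq_centre_plus_leaves[OF fin] \<open>0 \<in> S\<close>
    unfolding k_def by (simp only: if_True)
  also have "(real n - 1 - real k) * ?c = (real n - 1 - real k) / (real n - 1) * (\<Phi> True (Suc k) - \<Phi> True k)"
    by simp
  finally show ?thesis .
qed

lemma star_leaf_drift:
  assumes "0 < i" and "i < n"
  shows "(\<Sum>j<n. star_W n i j * (\<phi> (insert j S) - \<phi> S)) = \<phi> (insert 0 S) - \<phi> S"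
proof -
  have "(\<Sum>j<n. star_W n i j * (\<phi> (insert j S) - \<phi> S)) =
      (\<Sum>j<n. if j = 0 then \<phi> (insert 0 S) - \<phi> S else 0)"
    using assms by (intro sum.cong refl) (simp add: star_W_def)
  then show ?thesis using assms by simp
qed

lemma clique_resident_drift:
  assumes S: "S \<subseteq> {..<n}" and "i \<notin> S"
  shows "(\<Sum>j<n. clique_W n i j * (\<phi> (S - {j}) - \<phi> S)) =
    (\<Sum>j\<in>S. \<phi> (S - {j}) - \<phi> S) / (real n - 1)"
proof -
  have "(\<Sum>j<n. clique_W n i j * (\<phi> (S - {j}) - \<phi> S)) =
      (\<Sum>j<n. if j \<in> S then (\<phi> (S - {j}) - \<phi> S) / (real n - 1) else 0)"
    using \<open>i \<notin> S\<close> by (intro sum.cong refl) (auto simp: clique_W_def)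
  also have "\<dots> = (\<Sum>j\<in>S. \<phi> (S - {j}) - \<phi> S) / (real n - 1)"
    using S by (simp add: sum.inter_restrict[symmetric] Int_absorb1 sum_divide_distrib)
  finally show ?thesis .
qed

lemma star_lift_removal_sum:
  assumes "finite S"
  defines "k \<equiv> card (S - {0})"
  shows "(\<Sum>j\<in>S. star_lift \<Phi> (S - {j}) - star_lift \<Phi> S) =
    (if 0 \<in> S then \<Phi> False k - \<Phi> True k else 0) + real k * (\<Phi> (0 \<in> S) (k - 1) - \<Phi> (0 \<in> S) k)"
proof -
  have leaf: "star_lift \<Phi> (S - {j}) - star_lift \<Phi> S = \<Phi> (0 \<in> S) (k - 1) - \<Phi> (0 \<in> S) k"
    if "j \<in> S - {0}" for j
  proof -
    have "S - {j} - {0} = S - {0} - {j}" by auto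
    then show ?thesis using that assms by (simp add: star_lift_def k_def)
  qed
  show ?thesis
  proof (cases "0 \<in> S")
    case True
    then have "(\<Sum>j\<in>S. star_lift \<Phi> (S - {j}) - star_lift \<Phi> S) =
        (star_lift \<Phi> (S - {0}) - star_lift \<Phi> S) + (\<Sum>j\<in>S - {0}. star_lift \<Phi> (S - {j}) - star_lift \<Phi> S)"
      using assms by (simp add: sum.remove)
    then show ?thesis using True leaf by (simp add: star_lift_def k_def)
  next
    case False
    then have "S - {0} = S" by auto
    then show ?thesis using False leaf by (simp add: k_def)
  qed
qed

lemma moran_drift_clique_star:
  assumes S: "S \<subseteq> {..<n}"
  defines "k \<equiv> card (S - {0})"
  shows "moran_drift n r (clique_W n) (star_W n) (star_lift \<Phi>) S =
    (if 0 \<in> S then (real n - 1 - real k) / (real n - 1) *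
        (r * (\<Phi> True (Suc k) - \<Phi> True k) + \<Phi> False k - \<Phi> True k + real k * (\<Phi> True (k - 1) - \<Phi> True k))
     else real k * (r * (\<Phi> True k - \<Phi> False k) +
        (real n - real k) / (real n - 1) * (\<Phi> False (k - 1) - \<Phi> False k)))"
proof -
  let ?\<phi> = "star_lift \<Phi>"
  let ?D = "\<lambda>i. \<Sum>j<n. star_W n i j * (?\<phi> (insert j S) - ?\<phi> S)"
  let ?R = "(\<Sum>j\<in>S. ?\<phi> (S - {j}) - ?\<phi> S) / (real n - 1)"
  have fin: "finite S" using S finite_subset by blast
  have card_S: "real (card S) = (if 0 \<in> S then 1 else 0) + real k"
    using card_eq_centre_plus_leaves[OF fin] unfolding k_def .
  let ?T = "\<lambda>i. fitness r S i * (\<Sum>j<n. (if i \<in> S then star_W n i j else clique_W n i j) *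
      (?\<phi> (moran_update S i j) - ?\<phi> S))"
  have resident: "?T i = ?R" if "i \<in> {..<n} - S" for i
    using that clique_resident_drift[OF S, of i ?\<phi>] by (simp add: fitness_def moran_update_def)
  have mutant: "?T i = r * ?D i" if "i \<in> S" for i
    using that by (simp add: fitness_def moran_update_def sum_distrib_left)
  have "moran_drift n r (clique_W n) (star_W n) ?\<phi> S = (\<Sum>i\<in>{..<n} - S. ?T i) + (\<Sum>i\<in>S. ?T i)"
    unfolding moran_drift_def by (rule sum.subset_diff[OF S finite_lessThan])
  also have "\<dots> = (real n - real (card S)) * ?R + r * (\<Sum>i\<in>S. ?D i)"
    using resident mutant card_lessThan_diff[OF S] by (simp add: sum_distrib_left)
  also have "\<dots> = (if 0 \<in> S then (real n - 1 - real k) * ?R + r * ?D 0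
      else (real n - real k) * ?R + r * (real k * (\<Phi> True k - \<Phi> False k)))"
  proof (cases "0 \<in> S")
    case True
    have "?D i = 0" if "i \<in> S - {0}" for i
      using that S True star_leaf_drift[of i n ?\<phi> S] by (auto simp: insert_absorb)
    then have "(\<Sum>i\<in>S. ?D i) = ?D 0"
      using sum.remove[OF fin True, of ?D] by simp
    then show ?thesis using True card_S by simp
  next
    case False
    have "?D i = \<Phi> True k - \<Phi> False k" if "i \<in> S" for i
    proof -
      have "insert 0 S - {0} = S - {0}" by blast
      then show ?thesis
        using that S False star_leaf_drift[of i n ?\<phi> S] by (auto simp: star_lift_def k_def)
    qed
    moreover have "card S = k" using False unfolding k_def by simp
    ultimately show ?thesis using False by simp
  qed
  also have "\<dots> = (if 0 \<in> S then (real n - 1 - real k) / (real n - 1) *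
        (r * (\<Phi> True (Suc k) - \<Phi> True k) + \<Phi> False k - \<Phi> True k + real k * (\<Phi> True (k - 1) - \<Phi> True k))
     else real k * (r * (\<Phi> True k - \<Phi> False k) +
        (real n - real k) / (real n - 1) * (\<Phi> False (k - 1) - \<Phi> False k)))"
  proof (cases "0 \<in> S")
    case True
    have centre: "?D 0 = (real n - 1 - real k) / (real n - 1) * (\<Phi> True (Suc k) - \<Phi> True k)"
      using star_centre_drift[OF S True] unfolding k_def .
    have removal: "(\<Sum>j\<in>S. ?\<phi> (S - {j}) - ?\<phi> S) =
        \<Phi> False k - \<Phi> True k + real k * (\<Phi> True (k - 1) - \<Phi> True k)"
      using star_lift_removal_sum[OF fin, of \<Phi>] True unfolding k_def by simp
    show ?thesis
      unfolding centre removal using True by (simp add: divide_inverse algebra_simps)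
  next
    case False
    have removal: "(\<Sum>j\<in>S. ?\<phi> (S - {j}) - ?\<phi> S) = real k * (\<Phi> False (k - 1) - \<Phi> False k)"
      using star_lift_removal_sum[OF fin, of \<Phi>] False unfolding k_def by simp
    show ?thesis
      unfolding removal using False by (simp add: divide_inverse algebra_simps)
  qed
  finally show ?thesis .
qed

primrec star_level :: "real \<Rightarrow> real \<Rightarrow> nat \<Rightarrow> real" where
  "star_level r d 0 = d"
| "star_level r d (Suc k) = star_level r d k + fact k * d / r ^ Suc k"

definition star_potential :: "real \<Rightarrow> real \<Rightarrow> bool \<Rightarrow> nat \<Rightarrow> real" where
  "star_potential r d c k =
     (if c then star_level r d k else if k = 0 then 0 else if k = 1 then d else star_level r d k)"

lemma star_level_mono:
  assumes "r > 0" and "d \<ge> 0" and "j \<le> k"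
  shows "star_level r d j \<le> star_level r d k"
proof -
  have "incseq (star_level r d)"
    using assms(1,2) by (intro incseq_SucI) simp
  then show ?thesis using assms(3) by (rule incseqD)
qed

lemma star_level_diff_rec:
  assumes "r \<noteq> 0"
  shows "r * (star_level r d (Suc (Suc k)) - star_level r d (Suc k)) =
    real (Suc k) * (star_level r d (Suc k) - star_level r d k)"
  using assms by (simp add: field_simps)

lemma star_potential_nonneg:
  assumes "r > 0" and "d \<ge> 0"
  shows "star_potential r d c k \<ge> 0"
  using star_level_mono[OF assms, of 0 k] assms by (simp add: star_potential_def)

lemma star_potential_centre_drift_nonpos:
  assumes "r > 0" and "d \<ge> 0"
  defines "P \<equiv> star_potential r d"
  shows "r * (P True (Suc k) - P True k) + P False k - P True k + real k * (P True (k - 1) - P True k) \<le> 0"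
proof (cases k)
  case 0
  then show ?thesis using assms by (simp add: P_def star_potential_def)
next
  case (Suc j)
  show ?thesis
  proof (cases j)
    case 0
    then show ?thesis using Suc assms by (simp add: P_def star_potential_def)
  next
    case (Suc i)
    then show ?thesis
      using \<open>k = Suc j\<close> star_level_diff_rec[of r d "Suc i"] assms
      by (simp add: P_def star_potential_def algebra_simps)
  qed
qed

lemma star_potential_leaf_drift_nonpos:
  assumes "r > 0" and "d \<ge> 0" and "0 < k" and "k \<le> n" and "2 \<le> n"
  defines "P \<equiv> star_potential r d"
  shows "r * (P True k - P False k) + (real n - real k) / (real n - 1) * (P False (k - 1) - P False k) \<le> 0"
proof (cases "k = 1")
  case True
  then show ?thesis using assms by (simp add: P_def star_potential_def)
next
  case False
  have "P False (k - 1) \<le> P False k"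
    using False assms star_level_mono[of r d "k - 1" k] star_level_mono[of r d 0 k]
    by (auto simp: P_def star_potential_def)
  moreover have "P True k = P False k"
    using False assms by (simp add: P_def star_potential_def)
  moreover have "(real n - real k) / (real n - 1) \<ge> 0"
    using assms by simp
  ultimately show ?thesis
    using mult_nonneg_nonpos by (metis add_0 diff_self diff_le_0_iff_le mult_zero_right)
qed

lemma star_potential_superharmonic:
  assumes n: "n \<ge> 2" and r: "r > 0" and d: "d \<ge> 0" and S: "S \<subseteq> {..<n}"
  defines "\<phi> \<equiv> star_lift (star_potential r d)"
  shows "(\<Sum>U\<in>Pow {..<n}. moran_step n r (clique_W n) (star_W n) S U * \<phi> U) \<le> \<phi> S"
proof -
  define k where "k = card (S - {0})"
  have card_S: "real (card S) = (if 0 \<in> S then 1 else 0) + real k"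
    using card_eq_centre_plus_leaves[OF finite_subset[OF S]] unfolding k_def by simp
  have "real (card S) \<le> real n"
    using card_mono[OF finite_lessThan S] by simp
  have drift: "moran_drift n r (clique_W n) (star_W n) \<phi> S =
    (if 0 \<in> S then (real n - 1 - real k) / (real n - 1) *
        (r * (star_potential r d True (Suc k) - star_potential r d True k) + star_potential r d False k
         - star_potential r d True k + real k * (star_potential r d True (k - 1) - star_potential r d True k))
     else real k * (r * (star_potential r d True k - star_potential r d False k) +
        (real n - real k) / (real n - 1) * (star_potential r d False (k - 1) - star_potential r d False k)))"
    unfolding \<phi>_def k_def by (rule moran_drift_clique_star[OF S])
  have "moran_drift n r (clique_W n) (star_W n) \<phi> S \<le> 0"
  proof (cases "0 \<in> S")
    case True
    have "(real n - 1 - real k) / (real n - 1) \<ge> 0"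
      using card_S True \<open>real (card S) \<le> real n\<close> by simp
    then show ?thesis
      unfolding drift if_P[OF True]
      using star_potential_centre_drift_nonpos[OF r d, of k] by (rule mult_nonneg_nonpos)
  next
    case False
    have "k \<le> n"
      using card_S False \<open>real (card S) \<le> real n\<close> by simp
    then show ?thesis
      unfolding drift if_not_P[OF False]
      using star_potential_leaf_drift_nonpos[OF r d _ _ n, of k]
      by (cases "k = 0") (simp_all add: mult_nonneg_nonpos)
  qed
  moreover have "(\<Sum>i<n. fitness r S i) > 0"
    using n r by (intro sum_pos) (auto simp: fitness_def lessThan_empty_iff)
  moreover have "(\<Sum>U\<in>Pow {..<n}. moran_step n r (clique_W n) (star_W n) S U * \<phi> U) =
      \<phi> S + moran_drift n r (clique_W n) (star_W n) \<phi> S / (\<Sum>i<n. fitness r S i)"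
    using n r by (intro sum_moran_step_mult_eq_drift[OF S] clique_W_row_sum star_W_row_sum) auto
  ultimately show ?thesis
    by (simp add: divide_nonpos_pos)
qed

lemma star_lift_singleton: "star_lift (star_potential r d) {v} = d"
  by (cases "v = 0") (simp_all add: star_lift_def star_potential_def)

lemma star_potential_full:
  assumes n: "n \<ge> 2" and "r > 0"
  defines "d \<equiv> r ^ (n - 1) / fact (n - 2)"
  shows "star_lift (star_potential r d) {..<n} \<ge> 1"
proof -
  have "card ({..<n} - {0}) = Suc (n - 2)"
    using n by simp
  then have "star_lift (star_potential r d) {..<n} = star_level r d (n - 2) + fact (n - 2) * d / r ^ Suc (n - 2)"
    using n by (simp add: star_lift_def star_potential_def)
  also have "fact (n - 2) * d / r ^ Suc (n - 2) = 1"
    using n \<open>r > 0\<close> by (simp add: d_def Suc_diff_Suc numeral_2_eq_2)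
  finally have "star_lift (star_potential r d) {..<n} = star_level r d (n - 2) + 1" .
  moreover have "d \<ge> 0"
    using \<open>r > 0\<close> by (simp add: d_def)
  ultimately show ?thesis
    using star_level_mono[OF \<open>r > 0\<close> \<open>d \<ge> 0\<close>, of 0 "n - 2"] by simp
qed

theorem theorem4:
  fixes n :: nat and r :: real
  assumes "n \<ge> 3" and "r > 0"
  shows "fixation_prob n r (clique_W n) (star_W n) \<le> r ^ (n - 1) / fact (n - 2)"
proof -
  define d where "d = r ^ (n - 1) / fact (n - 2)"
  have n: "n \<ge> 2" and "n > 0" and d: "d \<ge> 0"
    using assms by (auto simp: d_def)
  let ?\<phi> = "star_lift (star_potential r d)"
  have step_nonneg: "moran_step n r (clique_W n) (star_W n) S T \<ge> 0" for S T
    using \<open>r > 0\<close> \<open>n > 0\<close> by (intro moran_step_nonneg) (simp_all add: clique_W_nonneg star_W_nonneg)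
  have absorbing: "moran_step n r (clique_W n) (star_W n) {..<n} {..<n} = 1"
    using \<open>r > 0\<close> \<open>n > 0\<close> star_W_row_sum[OF _ n] by (intro moran_step_full_absorbing)
  have nonneg: "?\<phi> S \<ge> 0" for S
    unfolding star_lift_def using star_potential_nonneg[OF \<open>r > 0\<close> d] .
  have "fixation_from n r (clique_W n) (star_W n) {v} \<le> d" if "v < n" for v
    using fixation_from_le_superharmonic[OF step_nonneg absorbing
        star_potential_superharmonic[OF n \<open>r > 0\<close> d] nonneg
        star_potential_full[OF n \<open>r > 0\<close>, folded d_def], of "{v}"] that
    by (simp add: star_lift_singleton)
  then show ?thesis
    unfolding d_def[symmetric] by (rule fixation_prob_le[OF \<open>n > 0\<close>])
qed

end
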